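(* Let $m$ be a positive integer and let $Q_1,\dots,Q_m$ be the partition of $\{0,1,\dots,m+1\}^3$ given by $(x,y,z)\in Q_i \iff f(x,y,z)=i$, where $f$ is defined below. Then for every $1\le i<j\le m$ and every unit vector $v\in\mathbb{Z}^3$ parallel to a coordinate axis, the sets $Q_i+(m+2)v$ and $Q_j$ are adjacent (i.e. the partition is externally adjacent).
   Context: Define $f:\{0,\dots,m+1\}^3\to\{1,\dots,m\}$ by: $f(x,y,z)=y$ if $0\le x\le m$, $1\le y\le m$, $z=0$; $f(x,y,z)=x$ if $1\le x\le m$, $0\le y\le m$, $z=m+1$; $f(x,y,z)=y$ if $x=0$, $1\le y\le m$, $1\le z\le m$; $f(x,y,z)=x$ if $1\le x\le m$, $y=0$, $1\le z\le m$; $f(x,y,z)=z$ if $1\le x\le m+1$, $1\le y\le m+1$, $1\le z\le m$; and $f(x,y,z)=1$ for all remaining points. Two disjoint sets $P,Q\subset\mathbb{Z}^3$ are adjacent if there exist $p\in P$, $q\in Q$ and a unit vector $v$ parallel to a coordinate axis with $p+v=q$. *)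

theory Defs
  imports Main
begin

type_synonym pt = "int \<times> int \<times> int"

definition fcol :: "int \<Rightarrow> pt \<Rightarrow> int" where
  "fcol m p = (case p of (x, y, z) \<Rightarrow>
     if 0 \<le> x \<and> x \<le> m \<and> 1 \<le> y \<and> y \<le> m \<and> z = 0 then y
     else if 1 \<le> x \<and> x \<le> m \<and> 0 \<le> y \<and> y \<le> m \<and> z = m + 1 then x
     else if x = 0 \<and> 1 \<le> y \<and> y \<le> m \<and> 1 \<le> z \<and> z \<le> m then y
     else if 1 \<le> x \<and> x \<le> m \<and> y = 0 \<and> 1 \<le> z \<and> z \<le> m then x
     else if 1 \<le> x \<and> x \<le> m + 1 \<and> 1 \<le> y \<and> y \<le> m + 1 \<and> 1 \<le> z \<and> z \<le> m then z
     else 1)"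

definition cube :: "int \<Rightarrow> pt set" where
  "cube m = {0..m+1} \<times> {0..m+1} \<times> {0..m+1}"

definition Qpart :: "int \<Rightarrow> int \<Rightarrow> pt set" where
  "Qpart m i = {p \<in> cube m. fcol m p = i}"

definition unit_vecs :: "pt set" where
  "unit_vecs = {(1,0,0), (-1,0,0), (0,1,0), (0,-1,0), (0,0,1), (0,0,-1)}"

definition padd :: "pt \<Rightarrow> pt \<Rightarrow> pt" where
  "padd p q = (fst p + fst q, fst (snd p) + fst (snd q), snd (snd p) + snd (snd q))"

definition pscale :: "int \<Rightarrow> pt \<Rightarrow> pt" where
  "pscale c p = (c * fst p, c * fst (snd p), c * snd (snd p))"

definition translate :: "pt set \<Rightarrow> pt \<Rightarrow> pt set" where
  "translate P w = (\<lambda>p. padd p w) ` P"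

definition adjacent :: "pt set \<Rightarrow> pt set \<Rightarrow> bool" where
  "adjacent P Q \<longleftrightarrow> P \<inter> Q = {} \<and>
     (\<exists>p\<in>P. \<exists>q\<in>Q. \<exists>v\<in>unit_vecs. padd p v = q)"

end

theory Submission
  imports Defs
begin

text \<open>On each pair of opposite faces of the cube the colour is read off from two different
  coordinates. So a point of colour i on one face, shifted by (m + 2) v across the cube, lands
  one unit step outside the opposite face, next to a point whose colour is the coordinate that
  the first face ignores; that coordinate can be chosen to be j. This works for all
  colours i and j, not only for i < j.\<close>

lemma fcol_on_faces:
  assumes "1 \<le> a" "a \<le> m" "1 \<le> b" "b \<le> m"
  shows "fcol m (0, a, b) = a" "fcol m (m + 1, a, b) = b"
    and "fcol m (a, 0, b) = a" "fcol m (a, m + 1, b) = b"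
    and "fcol m (a, b, 0) = b" "fcol m (a, b, m + 1) = a"
  using assms by (auto simp: fcol_def)

lemma translate_cube_disjoint:
  assumes "v \<in> unit_vecs"
  shows "translate (cube m) (pscale (m + 2) v) \<inter> cube m = {}"
  using assms by (auto simp: unit_vecs_def translate_def cube_def padd_def pscale_def)

lemma adjacent_translate_QpartI:
  assumes "v \<in> unit_vecs" "p \<in> Qpart m i" "q \<in> Qpart m j" "e \<in> unit_vecs"
    and "padd (padd p (pscale (m + 2) v)) e = q"
  shows "adjacent (translate (Qpart m i) (pscale (m + 2) v)) (Qpart m j)"
proof -
  have "Qpart m k \<subseteq> cube m" for k
    by (auto simp: Qpart_def)
  then have "translate (Qpart m i) (pscale (m + 2) v) \<subseteq> translate (cube m) (pscale (m + 2) v)"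
    by (auto simp: translate_def)
  with translate_cube_disjoint[OF \<open>v \<in> unit_vecs\<close>] \<open>Qpart m j \<subseteq> cube m\<close>
  have "translate (Qpart m i) (pscale (m + 2) v) \<inter> Qpart m j = {}"
    by blast
  moreover have "padd p (pscale (m + 2) v) \<in> translate (Qpart m i) (pscale (m + 2) v)"
    using \<open>p \<in> Qpart m i\<close> by (simp add: translate_def)
  ultimately show ?thesis
    using assms(3-5) unfolding adjacent_def by blast
qed

lemma translate_Qpart_adjacent:
  assumes "1 \<le> i" "i \<le> m" "1 \<le> j" "j \<le> m" "v \<in> unit_vecs"
  shows "adjacent (translate (Qpart m i) (pscale (m + 2) v)) (Qpart m j)"
proof -
  note witness = adjacent_translate_QpartI[OF \<open>v \<in> unit_vecs\<close>]
  note simps = fcol_on_faces[OF assms(1-4)] fcol_on_faces[OF assms(3,4,1,2)]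
    Qpart_def cube_def unit_vecs_def padd_def pscale_def
  from \<open>v \<in> unit_vecs\<close> show ?thesis
    unfolding unit_vecs_def
  proof (elim insertE emptyE)
    assume "v = (1, 0, 0)"
    then show ?thesis
      by (intro witness[of "(0, i, j)" _ _ "(m + 1, i, j)" _ "(-1, 0, 0)"]) (use assms in \<open>auto simp: simps\<close>)
  next
    assume "v = (-1, 0, 0)"
    then show ?thesis
      by (intro witness[of "(m + 1, j, i)" _ _ "(0, j, i)" _ "(1, 0, 0)"]) (use assms in \<open>auto simp: simps\<close>)
  next
    assume "v = (0, 1, 0)"
    then show ?thesis
      by (intro witness[of "(i, 0, j)" _ _ "(i, m + 1, j)" _ "(0, -1, 0)"]) (use assms in \<open>auto simp: simps\<close>)
  next
    assume "v = (0, -1, 0)"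
    then show ?thesis
      by (intro witness[of "(j, m + 1, i)" _ _ "(j, 0, i)" _ "(0, 1, 0)"]) (use assms in \<open>auto simp: simps\<close>)
  next
    assume "v = (0, 0, 1)"
    then show ?thesis
      by (intro witness[of "(j, i, 0)" _ _ "(j, i, m + 1)" _ "(0, 0, -1)"]) (use assms in \<open>auto simp: simps\<close>)
  next
    assume "v = (0, 0, -1)"
    then show ?thesis
      by (intro witness[of "(i, j, m + 1)" _ _ "(i, j, 0)" _ "(0, 0, 1)"]) (use assms in \<open>auto simp: simps\<close>)
  qed
qed

theorem lemma2p2:
  fixes m :: int
  assumes "m \<ge> 1"
  shows "\<forall>i j v. 1 \<le> i \<and> i < j \<and> j \<le> m \<and> v \<in> unit_vecs \<longrightarrow>
           adjacent (translate (Qpart m i) (pscale (m + 2) v)) (Qpart m j)"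
  using translate_Qpart_adjacent by simp

end
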